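(* Let $(u_n)\subset X$ with $u_n\rightharpoonup u$ weakly in $X$. Then $\lim_{n\to\infty}\int_{\mathbb{R}^N}\int_{\mathbb{R}^N}\ln(1+|x-y|)|u_n(x)|^p|u(y)|^{p-2}u(y)(u_n(y)-u(y))\,dxdy=0$.
   Context: $s\in(0,1)$, $p>2$, $N=sp$; $W^{s,p}(\mathbb{R}^N)$ is the fractional Sobolev space with norm $\|u\|=([u]_{s,p}^p+\|u\|_p^p)^{1/p}$; $X=\{u\in W^{s,p}(\mathbb{R}^N):\int\ln(1+|x|)|u|^pdx<\infty\}$, a reflexive Banach space with norm $\|u\|_X=(\|u\|^p+\int\ln(1+|x|)|u|^pdx)^{1/p}$. *)

theory Defs
  imports "HOL-Analysis.Analysis"
begin

definition gagliardo_pow :: "real \<Rightarrow> real \<Rightarrow> ('a::euclidean_space \<Rightarrow> real) \<Rightarrow> ennreal" where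
  "gagliardo_pow s p u =
     (\<integral>\<^sup>+ x. \<integral>\<^sup>+ y. ennreal (\<bar>u x - u y\<bar> powr p / norm (x - y) powr (real DIM('a) + s * p)) \<partial>lborel \<partial>lborel)"

definition Lp_pow :: "real \<Rightarrow> ('a::euclidean_space \<Rightarrow> real) \<Rightarrow> ennreal" where
  "Lp_pow p u = (\<integral>\<^sup>+ x. ennreal (\<bar>u x\<bar> powr p) \<partial>lborel)"

definition log_pow :: "real \<Rightarrow> ('a::euclidean_space \<Rightarrow> real) \<Rightarrow> ennreal" where
  "log_pow p u = (\<integral>\<^sup>+ x. ennreal (ln (1 + norm x) * \<bar>u x\<bar> powr p) \<partial>lborel)"

definition Wsp :: "real \<Rightarrow> real \<Rightarrow> ('a::euclidean_space \<Rightarrow> real) set" where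
  "Wsp s p = {u. u \<in> borel_measurable lborel \<and> gagliardo_pow s p u < \<infinity> \<and> Lp_pow p u < \<infinity>}"

definition Xsp :: "real \<Rightarrow> real \<Rightarrow> ('a::euclidean_space \<Rightarrow> real) set" where
  "Xsp s p = {u \<in> Wsp s p. log_pow p u < \<infinity>}"

definition normX :: "real \<Rightarrow> real \<Rightarrow> ('a::euclidean_space \<Rightarrow> real) \<Rightarrow> real" where
  "normX s p u = (enn2real (gagliardo_pow s p u + Lp_pow p u + log_pow p u)) powr (1 / p)"

definition dualX :: "real \<Rightarrow> real \<Rightarrow> (('a::euclidean_space \<Rightarrow> real) \<Rightarrow> real) set" where
  "dualX s p = {f. (\<forall>u\<in>Xsp s p. \<forall>v\<in>Xsp s p. \<forall>a b.
                     f (\<lambda>x. a * u x + b * v x) = a * f u + b * f v)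
                 \<and> (\<exists>C. \<forall>u\<in>Xsp s p. \<bar>f u\<bar> \<le> C * normX s p u)}"

definition weak_convX :: "real \<Rightarrow> real \<Rightarrow> (nat \<Rightarrow> 'a::euclidean_space \<Rightarrow> real) \<Rightarrow> ('a \<Rightarrow> real) \<Rightarrow> bool" where
  "weak_convX s p U u \<longleftrightarrow> (\<forall>n. U n \<in> Xsp s p) \<and> u \<in> Xsp s p \<and>
     (\<forall>f\<in>dualX s p. (\<lambda>n. f (U n)) \<longlonglongrightarrow> f u)"

end

theory Submission
  imports Defs
begin

(*
  Let W (log_weighted_lborel) be Lebesgue measure with density w(x) = 1 + ln (1 + |x|) (log_weight).
  The space X embeds continuously into L^p(W), so U_n converges to u weakly in L^p(W) and, by the
  uniform boundedness principle (proved below by a gliding hump), is bounded there.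
  With h = |u|^(p-2) u, which lies in L^q(W), and K_n(y) = \<integral> ln (1 + |x - y|) |U_n(x)|^p dx,
  Fubini turns the double integral into \<integral> K_n h (U_n - u).  Because ln (1 + |x - y|) \<le> w(x) w(y)
  and is 1-Lipschitz in y, the K_n are bounded by C w and uniformly Lipschitz.  On a large ball they
  are therefore uniformly close to step functions, against which h (U_n - u) tends to 0 by weak
  convergence; outside the ball the contribution is small uniformly in n by Hoelder's inequality.
*)

section \<open>Lebesgue spaces of real functions\<close>

definition Lp_space :: "real \<Rightarrow> 'b measure \<Rightarrow> ('b \<Rightarrow> real) set" where
  "Lp_space p M = {v \<in> borel_measurable M. integrable M (\<lambda>x. \<bar>v x\<bar> powr p)}"

definition Lp_norm :: "real \<Rightarrow> 'b measure \<Rightarrow> ('b \<Rightarrow> real) \<Rightarrow> real" where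
  "Lp_norm p M v = (\<integral>x. \<bar>v x\<bar> powr p \<partial>M) powr (1 / p)"

definition Lp_bounded_linear :: "real \<Rightarrow> 'b measure \<Rightarrow> (('b \<Rightarrow> real) \<Rightarrow> real) \<Rightarrow> bool" where
  "Lp_bounded_linear p M f \<longleftrightarrow>
     (\<forall>u\<in>Lp_space p M. \<forall>v\<in>Lp_space p M. \<forall>a b. f (\<lambda>x. a * u x + b * v x) = a * f u + b * f v) \<and>
     (\<exists>C. \<forall>v\<in>Lp_space p M. \<bar>f v\<bar> \<le> C * Lp_norm p M v)"

lemma Lp_spaceD:
  assumes "v \<in> Lp_space p M"
  shows "v \<in> borel_measurable M" "integrable M (\<lambda>x. \<bar>v x\<bar> powr p)"
  using assms unfolding Lp_space_def by auto

lemma Lp_norm_nonneg: "0 \<le> Lp_norm p M v"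
  unfolding Lp_norm_def by simp

lemma Lp_norm_powr: "p > 0 \<Longrightarrow> Lp_norm p M v powr p = (\<integral>x. \<bar>v x\<bar> powr p \<partial>M)"
  unfolding Lp_norm_def by (simp add: powr_powr integral_nonneg_AE)

lemma Lp_norm_eq_0_imp_AE_zero:
  assumes "p > 0" "v \<in> Lp_space p M" "Lp_norm p M v = 0"
  shows "AE x in M. v x = 0"
proof -
  have "(\<integral>x. \<bar>v x\<bar> powr p \<partial>M) = 0"
    using Lp_norm_powr[of p M v] assms by simp
  then have "AE x in M. \<bar>v x\<bar> powr p = 0"
    using integral_nonneg_eq_0_iff_AE[OF Lp_spaceD(2)[OF assms(2)]] by simp
  then show ?thesis by eventually_elim simp
qed

lemma Lp_space_dominated:
  assumes v: "v \<in> Lp_space p M" and p: "p > 0"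
    and f: "f \<in> borel_measurable M" and le: "\<And>x. \<bar>f x\<bar> \<le> \<bar>v x\<bar>"
  shows "f \<in> Lp_space p M" and "Lp_norm p M f \<le> Lp_norm p M v"
proof -
  have le_powr: "\<bar>f x\<bar> powr p \<le> \<bar>v x\<bar> powr p" for x
    using le p by (intro powr_mono2) auto
  have int: "integrable M (\<lambda>x. \<bar>f x\<bar> powr p)"
    by (rule Bochner_Integration.integrable_bound[OF Lp_spaceD(2)[OF v]]) (use f le_powr in auto)
  then show "f \<in> Lp_space p M"
    using f unfolding Lp_space_def by simp
  show "Lp_norm p M f \<le> Lp_norm p M v"
    unfolding Lp_norm_def using int Lp_spaceD[OF v] le_powr p
    by (intro powr_mono2 integral_mono integral_nonneg_AE) (auto simp: le)
qed

lemma Holder_inequality: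
  fixes f g :: "'b \<Rightarrow> real"
  assumes pq: "p > 1" "q > 1" "1/p + 1/q = 1"
    and f: "f \<in> Lp_space p M" and g: "g \<in> Lp_space q M"
  shows "integrable M (\<lambda>x. f x * g x)"
    and "(\<integral>x. \<bar>f x * g x\<bar> \<partial>M) \<le> Lp_norm p M f * Lp_norm q M g"
proof -
  note [measurable] = Lp_spaceD(1)[OF f] Lp_spaceD(1)[OF g]
  have Young: "\<bar>a\<bar> * \<bar>b\<bar> \<le> \<bar>a\<bar> powr p / p + \<bar>b\<bar> powr q / q" for a b :: real
    using Youngs_inequality[OF pq] by simp
  then have Young_abs: "\<bar>a * b\<bar> \<le> \<bar>\<bar>a\<bar> powr p / p + \<bar>b\<bar> powr q / q\<bar>" for a b :: real
    by (metis abs_ge_self abs_mult order_trans)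
  show int: "integrable M (\<lambda>x. f x * g x)"
    by (rule Bochner_Integration.integrable_bound[where f="\<lambda>x. \<bar>f x\<bar> powr p / p + \<bar>g x\<bar> powr q / q"])
       (use Lp_spaceD(2)[OF f] Lp_spaceD(2)[OF g] Young_abs in auto)
  define A B where "A = Lp_norm p M f" and "B = Lp_norm q M g"
  show "(\<integral>x. \<bar>f x * g x\<bar> \<partial>M) \<le> A * B"
  proof (cases "A = 0 \<or> B = 0")
    case True
    then have "AE x in M. f x = 0 \<or> g x = 0"
      using Lp_norm_eq_0_imp_AE_zero[OF _ f] Lp_norm_eq_0_imp_AE_zero[OF _ g] pq
      unfolding A_def B_def by (auto elim: AE_mp)
    then have "(\<integral>x. \<bar>f x * g x\<bar> \<partial>M) = 0"
      by (intro integral_eq_zero_AE) auto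
    then show ?thesis
      by (simp add: A_def B_def Lp_norm_nonneg)
  next
    case False
    then have AB: "A > 0" "B > 0"
      using Lp_norm_nonneg unfolding A_def B_def by (auto simp: less_le)
    have pt: "\<bar>f x * g x\<bar> / (A * B) \<le> \<bar>f x\<bar> powr p / (p * A powr p) + \<bar>g x\<bar> powr q / (q * B powr q)" for x
      using Young[of "f x / A" "g x / B"] AB by (simp add: abs_mult powr_divide abs_divide mult.commute)
    have "(\<integral>x. \<bar>f x * g x\<bar> / (A * B) \<partial>M)
        \<le> (\<integral>x. \<bar>f x\<bar> powr p / (p * A powr p) + \<bar>g x\<bar> powr q / (q * B powr q) \<partial>M)"
      using int Lp_spaceD(2)[OF f] Lp_spaceD(2)[OF g] pt by (intro integral_mono) auto
    also have "\<dots> = A powr p / (p * A powr p) + B powr q / (q * B powr q)"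
      using Lp_spaceD(2)[OF f] Lp_spaceD(2)[OF g] pq by (simp add: A_def B_def Lp_norm_powr)
    also have "\<dots> = 1 / p + 1 / q"
      using AB by simp
    finally show ?thesis
      using AB pq by (simp add: field_simps)
  qed
qed

lemma Holder_inequality_diff:
  assumes pq: "p > 1" "q > 1" "1/p + 1/q = 1"
    and \<xi>: "\<xi> \<in> Lp_space q M" and f: "f \<in> Lp_space p M" and g: "g \<in> Lp_space p M"
  shows "integrable M (\<lambda>x. \<xi> x * (f x - g x))"
    and "(\<integral>x. \<bar>\<xi> x * (f x - g x)\<bar> \<partial>M) \<le> Lp_norm q M \<xi> * (Lp_norm p M f + Lp_norm p M g)"
proof -
  have int_f: "integrable M (\<lambda>x. f x * \<xi> x)" and int_g: "integrable M (\<lambda>x. g x * \<xi> x)"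
    using Holder_inequality(1)[OF pq f \<xi>] Holder_inequality(1)[OF pq g \<xi>] .
  then show int: "integrable M (\<lambda>x. \<xi> x * (f x - g x))"
    by (simp add: algebra_simps)
  have "(\<integral>x. \<bar>\<xi> x * (f x - g x)\<bar> \<partial>M) \<le> (\<integral>x. \<bar>f x * \<xi> x\<bar> + \<bar>g x * \<xi> x\<bar> \<partial>M)"
  proof (rule integral_mono)
    show "integrable M (\<lambda>x. \<bar>\<xi> x * (f x - g x)\<bar>)"
      using integrable_abs[OF int] .
    show "integrable M (\<lambda>x. \<bar>f x * \<xi> x\<bar> + \<bar>g x * \<xi> x\<bar>)"
      using integrable_abs[OF int_f] integrable_abs[OF int_g] by (rule Bochner_Integration.integrable_add)
    fix x
    have "\<bar>\<xi> x\<bar> * \<bar>f x - g x\<bar> \<le> \<bar>\<xi> x\<bar> * (\<bar>f x\<bar> + \<bar>g x\<bar>)"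
      by (rule mult_left_mono[OF abs_triangle_ineq4 abs_ge_zero])
    moreover have "\<bar>f x * \<xi> x\<bar> + \<bar>g x * \<xi> x\<bar> = \<bar>\<xi> x\<bar> * (\<bar>f x\<bar> + \<bar>g x\<bar>)"
      by (simp add: abs_mult algebra_simps)
    ultimately show "\<bar>\<xi> x * (f x - g x)\<bar> \<le> \<bar>f x * \<xi> x\<bar> + \<bar>g x * \<xi> x\<bar>"
      by (simp only: abs_mult)
  qed
  also have "\<dots> = (\<integral>x. \<bar>f x * \<xi> x\<bar> \<partial>M) + (\<integral>x. \<bar>g x * \<xi> x\<bar> \<partial>M)"
    using int_f int_g by simp
  also have "\<dots> \<le> Lp_norm p M f * Lp_norm q M \<xi> + Lp_norm p M g * Lp_norm q M \<xi>"
    using Holder_inequality(2)[OF pq f \<xi>] Holder_inequality(2)[OF pq g \<xi>] by (rule add_mono)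
  finally show "(\<integral>x. \<bar>\<xi> x * (f x - g x)\<bar> \<partial>M) \<le> Lp_norm q M \<xi> * (Lp_norm p M f + Lp_norm p M g)"
    by (simp add: algebra_simps)
qed

lemma Lp_pairing_bound:
  assumes pq: "p > 1" "q > 1" "1/p + 1/q = 1"
    and \<phi>: "\<phi> \<in> Lp_space q M" and v: "v \<in> Lp_space p M"
  shows "\<bar>\<integral>x. \<phi> x * v x \<partial>M\<bar> \<le> Lp_norm q M \<phi> * Lp_norm p M v"
proof -
  have "\<bar>\<integral>x. \<phi> x * v x \<partial>M\<bar> \<le> (\<integral>x. \<bar>\<phi> x * v x\<bar> \<partial>M)"
    by (rule integral_abs_bound)
  also have "\<dots> = (\<integral>x. \<bar>v x * \<phi> x\<bar> \<partial>M)"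
    by (simp add: mult.commute)
  also have "\<dots> \<le> Lp_norm p M v * Lp_norm q M \<phi>"
    by (rule Holder_inequality(2)[OF pq v \<phi>])
  finally show ?thesis
    by (simp add: mult.commute)
qed

lemma Lp_space_signed_power:
  assumes pq: "p > 1" "q > 1" "1/p + 1/q = 1" and v: "v \<in> Lp_space p M"
  shows "\<bar>\<bar>v x\<bar> powr (p - 2) * v x\<bar> powr q = \<bar>v x\<bar> powr p"
    and "(\<lambda>x. \<bar>v x\<bar> powr (p - 2) * v x) \<in> Lp_space q M"
proof -
  have pq': "(p - 1) * q = p"
    using pq by (simp add: field_simps)
  have abs_eq: "\<bar>\<bar>v x\<bar> powr (p - 2) * v x\<bar> = \<bar>v x\<bar> powr (p - 1)" for x
  proof (cases "v x = 0")
    case False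
    have "\<bar>v x\<bar> powr (p - 1) = \<bar>v x\<bar> powr ((p - 2) + 1)"
      by simp
    also have "\<dots> = \<bar>v x\<bar> powr (p - 2) * \<bar>v x\<bar> powr 1"
      by (rule powr_add)
    finally show ?thesis
      using False by (simp add: abs_mult)
  qed simp
  show pow: "\<bar>\<bar>v x\<bar> powr (p - 2) * v x\<bar> powr q = \<bar>v x\<bar> powr p" for x
    unfolding abs_eq by (simp add: powr_powr pq')
  show "(\<lambda>x. \<bar>v x\<bar> powr (p - 2) * v x) \<in> Lp_space q M"
    using Lp_spaceD[OF v] unfolding Lp_space_def by (simp add: pow)
qed

lemma Lp_norm_tail_tendsto_zero:
  fixes \<phi> :: "'a::real_normed_vector \<Rightarrow> real"
  assumes q: "q > 0" and \<phi>: "\<phi> \<in> Lp_space q M" and M: "sets M = sets borel"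
  shows "(\<lambda>m. Lp_norm q M (\<lambda>x. indicator (- cball 0 (real m)) x * \<phi> x)) \<longlonglongrightarrow> 0"
proof -
  have [measurable]: "\<phi> \<in> borel_measurable M"
    using Lp_spaceD(1)[OF \<phi>] .
  have [measurable]: "- cball 0 r \<in> sets M" for r
    unfolding M by simp
  have pow: "\<bar>indicator (- cball 0 (real m)) x * \<phi> x\<bar> powr q
      = indicator (- cball 0 (real m)) x * \<bar>\<phi> x\<bar> powr q" for m x
    using q by (simp add: indicator_def)
  have "(\<lambda>m. \<integral>x. indicator (- cball 0 (real m)) x * \<bar>\<phi> x\<bar> powr q \<partial>M) \<longlonglongrightarrow> (\<integral>x. 0 \<partial>M)"
  proof (rule integral_dominated_convergence[where w="\<lambda>x. \<bar>\<phi> x\<bar> powr q"])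
    show "integrable M (\<lambda>x. \<bar>\<phi> x\<bar> powr q)"
      using Lp_spaceD(2)[OF \<phi>] .
    show "AE x in M. (\<lambda>m. indicator (- cball 0 (real m)) x * \<bar>\<phi> x\<bar> powr q) \<longlonglongrightarrow> 0"
    proof (intro AE_I2)
      fix x :: 'a
      obtain N :: nat where "norm x \<le> real N"
        using real_arch_simple by blast
      then have "\<forall>m\<ge>N. indicator (- cball 0 (real m)) x * \<bar>\<phi> x\<bar> powr q = 0"
        by (auto simp: indicator_def)
      then show "(\<lambda>m. indicator (- cball 0 (real m)) x * \<bar>\<phi> x\<bar> powr q) \<longlonglongrightarrow> 0"
        by (intro tendsto_eventually) (auto simp: eventually_sequentially)
    qed
    show "(\<lambda>x. indicator (- cball 0 (real m)) x * \<bar>\<phi> x\<bar> powr q) \<in> borel_measurable M" for m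
      by measurable
    show "AE x in M. norm (indicator (- cball 0 (real m)) x * \<bar>\<phi> x\<bar> powr q) \<le> \<bar>\<phi> x\<bar> powr q" for m
      by (intro AE_I2) (simp add: indicator_def)
  qed simp
  then have "(\<lambda>m. \<integral>x. \<bar>indicator (- cball 0 (real m)) x * \<phi> x\<bar> powr q \<partial>M) \<longlonglongrightarrow> 0"
    unfolding pow by simp
  then show ?thesis
    unfolding Lp_norm_def using q
    by (intro tendsto_zero_powrI[OF _ tendsto_const]) (auto intro: integral_nonneg_AE)
qed

lemma Lp_bounded_linear_integral:
  assumes pq: "p > 1" "q > 1" "1/p + 1/q = 1" and \<phi>: "\<phi> \<in> Lp_space q M"
  shows "Lp_bounded_linear p M (\<lambda>v. \<integral>x. \<phi> x * v x \<partial>M)"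
  unfolding Lp_bounded_linear_def
proof (intro conjI ballI allI exI)
  fix u v a b assume u: "u \<in> Lp_space p M" and v: "v \<in> Lp_space p M"
  have "integrable M (\<lambda>x. \<phi> x * u x)" "integrable M (\<lambda>x. \<phi> x * v x)"
    using Holder_inequality(1)[OF pq u \<phi>] Holder_inequality(1)[OF pq v \<phi>] by (simp_all add: mult.commute)
  then show "(\<integral>x. \<phi> x * (a * u x + b * v x) \<partial>M) = a * (\<integral>x. \<phi> x * u x \<partial>M) + b * (\<integral>x. \<phi> x * v x \<partial>M)"
    by (simp add: algebra_simps)
next
  fix v assume "v \<in> Lp_space p M"
  then show "\<bar>\<integral>x. \<phi> x * v x \<partial>M\<bar> \<le> Lp_norm q M \<phi> * Lp_norm p M v"
    by (rule Lp_pairing_bound[OF pq \<phi>])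
qed

lemma Lp_norming_function:
  assumes pq: "p > 1" "q > 1" "1/p + 1/q = 1" and v: "v \<in> Lp_space p M"
  obtains \<psi> where "\<psi> \<in> Lp_space q M" "Lp_norm q M \<psi> \<le> 1" "(\<integral>x. \<psi> x * v x \<partial>M) = Lp_norm p M v"
proof (cases "Lp_norm p M v = 0")
  case True
  show ?thesis
    by (rule that[of "\<lambda>_. 0"]) (use True pq in \<open>auto simp: Lp_space_def Lp_norm_def\<close>)
next
  case False
  define N where "N = Lp_norm p M v"
  have N: "N > 0"
    using False Lp_norm_nonneg unfolding N_def by (simp add: less_le)
  have pq': "(p - 1) * q = p"
    using pq by (simp add: field_simps)
  note [measurable] = Lp_spaceD(1)[OF v]
  define \<psi> where "\<psi> x = sgn (v x) * \<bar>v x\<bar> powr (p - 1) / N powr (p - 1)" for x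
  have abs_\<psi>: "\<bar>\<psi> x\<bar> = (\<bar>v x\<bar> / N) powr (p - 1)" for x
    using N by (simp add: \<psi>_def abs_mult powr_divide)
  have \<psi>_powr: "\<bar>\<psi> x\<bar> powr q = \<bar>v x\<bar> powr p / N powr p" for x
    using N unfolding abs_\<psi> by (simp add: powr_powr pq' powr_divide)
  have \<psi>_mult: "\<psi> x * v x = \<bar>v x\<bar> powr p / N powr (p - 1)" for x
  proof -
    have "\<psi> x * v x = \<bar>v x\<bar> * \<bar>v x\<bar> powr (p - 1) / N powr (p - 1)"
      unfolding \<psi>_def using abs_sgn[of "v x"] by (simp add: field_simps)
    also have "\<bar>v x\<bar> * \<bar>v x\<bar> powr (p - 1) = \<bar>v x\<bar> powr p"
      using pq by (cases "v x = 0") (simp_all add: powr_mult_base)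
    finally show ?thesis .
  qed
  have int_v: "(\<integral>x. \<bar>v x\<bar> powr p \<partial>M) = N powr p"
    using pq by (simp add: N_def Lp_norm_powr)
  have int: "integrable M (\<lambda>x. \<bar>\<psi> x\<bar> powr q)"
    unfolding \<psi>_powr using Lp_spaceD(2)[OF v] by simp
  show ?thesis
  proof (rule that[of \<psi>])
    show "\<psi> \<in> Lp_space q M"
      using int unfolding Lp_space_def \<psi>_def by simp
    have "(\<integral>x. \<bar>\<psi> x\<bar> powr q \<partial>M) = 1"
      using N unfolding \<psi>_powr by (simp add: int_v)
    then show "Lp_norm q M \<psi> \<le> 1"
      by (simp add: Lp_norm_def)
    have "(\<integral>x. \<psi> x * v x \<partial>M) = N powr p / N powr (p - 1)"
      unfolding \<psi>_mult by (simp add: int_v)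
    also have "\<dots> = N"
      using N by (simp add: powr_diff)
    finally show "(\<integral>x. \<psi> x * v x \<partial>M) = Lp_norm p M v"
      by (simp add: N_def)
  qed
qed

lemma Lp_bounded_linear_suminf:
  assumes f: "\<And>j. Lp_bounded_linear p M (f j)"
    and f_le: "\<And>j v. v \<in> Lp_space p M \<Longrightarrow> \<bar>f j v\<bar> \<le> Lp_norm p M v"
    and c: "summable (\<lambda>j. \<bar>c j\<bar>)"
  shows "Lp_bounded_linear p M (\<lambda>v. \<Sum>j. c j * f j v)"
proof -
  have term_le: "norm (c j * f j v) \<le> \<bar>c j\<bar> * Lp_norm p M v" if "v \<in> Lp_space p M" for j v
    using f_le[OF that] by (simp add: abs_mult mult_left_mono)
  have dom: "summable (\<lambda>j. \<bar>c j\<bar> * Lp_norm p M v)" for v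
    using c by (rule summable_mult2)
  have sum: "summable (\<lambda>j. c j * f j v)" if "v \<in> Lp_space p M" for v
    using summable_comparison_test'[OF dom term_le[OF that]] .
  show ?thesis
    unfolding Lp_bounded_linear_def
  proof (intro conjI ballI allI exI)
    fix u v a b assume u: "u \<in> Lp_space p M" and v: "v \<in> Lp_space p M"
    have "(\<Sum>j. c j * f j (\<lambda>x. a * u x + b * v x)) = (\<Sum>j. a * (c j * f j u) + b * (c j * f j v))"
      using f u v unfolding Lp_bounded_linear_def by (simp add: algebra_simps)
    also have "\<dots> = a * (\<Sum>j. c j * f j u) + b * (\<Sum>j. c j * f j v)"
      using sum[OF u] sum[OF v]
      by (simp add: suminf_add[symmetric] suminf_mult summable_mult)
    finally show "(\<Sum>j. c j * f j (\<lambda>x. a * u x + b * v x)) = a * (\<Sum>j. c j * f j u) + b * (\<Sum>j. c j * f j v)" .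
  next
    fix v assume v: "v \<in> Lp_space p M"
    have norm_sum: "summable (\<lambda>j. norm (c j * f j v))"
      by (rule summable_comparison_test'[OF dom]) (use term_le[OF v] in simp)
    have "\<bar>\<Sum>j. c j * f j v\<bar> \<le> (\<Sum>j. norm (c j * f j v))"
      using summable_norm[OF norm_sum] by simp
    also have "\<dots> \<le> (\<Sum>j. \<bar>c j\<bar> * Lp_norm p M v)"
      by (rule suminf_le[OF term_le[OF v] norm_sum dom])
    also have "\<dots> = (\<Sum>j. \<bar>c j\<bar>) * Lp_norm p M v"
      using c by (rule suminf_mult2[symmetric])
    finally show "\<bar>\<Sum>j. c j * f j v\<bar> \<le> (\<Sum>j. \<bar>c j\<bar>) * Lp_norm p M v" .
  qed
qed

section \<open>Uniform boundedness of weakly convergent sequences\<close>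

lemma geometric_weighted_suminf_lower_bound:
  fixes b :: "nat \<Rightarrow> real"
  assumes b_le: "\<And>j. \<bar>b j\<bar> \<le> N" and b_k: "b k = N"
  shows "2/3 * ((1/4)^k * N) - (\<Sum>j<k. \<bar>b j\<bar>) \<le> (\<Sum>j. (1/4)^j * b j)"
proof -
  define c :: "nat \<Rightarrow> real" where "c j = (1/4)^j" for j
  have c: "0 \<le> c j" "c j \<le> 1" for j
    by (simp_all add: c_def power_le_one)
  have c_sums: "(\<lambda>j. c j * N) sums (4/3 * N)"
    using sums_mult2[OF geometric_sums[of "1/4::real"], of N] by (simp add: c_def)
  have term_le: "norm (c j * b j) \<le> c j * N" for j
    using b_le[of j] c[of j] by (simp add: abs_mult mult_left_mono)
  have summable: "summable (\<lambda>j. c j * b j)"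
    using summable_comparison_test'[OF sums_summable[OF c_sums] term_le] .
  have split: "(\<Sum>j. c j * b j) = (\<Sum>j. c (j + Suc k) * b (j + Suc k)) + (\<Sum>j<k. c j * b j) + c k * N"
    using suminf_split_initial_segment[OF summable, of "Suc k"] b_k by simp
  have tail_sums: "(\<lambda>j. c (j + Suc k) * N) sums (c k * N / 3)"
    using sums_mult[OF c_sums, of "c (Suc k)"] by (simp add: c_def power_add ac_simps)
  have tail_norm_sum: "summable (\<lambda>j. norm (c (j + Suc k) * b (j + Suc k)))"
    by (rule summable_comparison_test'[OF sums_summable[OF tail_sums]]) (use term_le in simp)
  have "\<bar>\<Sum>j. c (j + Suc k) * b (j + Suc k)\<bar> \<le> (\<Sum>j. norm (c (j + Suc k) * b (j + Suc k)))"
    using summable_norm[OF tail_norm_sum] by simp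
  also have "\<dots> \<le> c k * N / 3"
    using suminf_le[OF term_le tail_norm_sum sums_summable[OF tail_sums]] tail_sums by (simp add: sums_iff)
  finally have tail: "\<bar>\<Sum>j. c (j + Suc k) * b (j + Suc k)\<bar> \<le> c k * N / 3" .
  have "\<bar>\<Sum>j<k. c j * b j\<bar> \<le> (\<Sum>j<k. \<bar>b j\<bar>)"
    using c by (intro order_trans[OF sum_abs sum_mono]) (simp add: abs_mult mult_left_le_one_le)
  with tail split show ?thesis
    unfolding c_def by linarith
qed

lemma gliding_hump_indices:
  fixes B N :: "nat \<Rightarrow> real"
  assumes B: "\<And>m. 0 \<le> B m" and N: "\<And>K. \<exists>n. K < N n"
  obtains r where "\<And>k. 3 * ((\<Sum>j<k. B (r j)) + real k + 1) < (1/4)^k * N (r k)"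
proof -
  have big: "\<exists>n. 3 * (S + real k + 1) < (1/4)^k * N n" for k S
  proof -
    obtain n where "4^k * (3 * (S + real k + 1)) < N n"
      using N by blast
    then show ?thesis
      by (intro exI[of _ n]) (simp add: field_simps)
  qed
  \<comment> \<open>The second component is an upper bound for the partial sums of B along the chosen indices.\<close>
  define P where "P k x \<longleftrightarrow> 0 \<le> snd x \<and> 3 * (snd x + real k + 1) < (1/4)^k * N (fst x)"
    for k and x :: "nat \<times> real"
  have "\<exists>f. \<forall>k. P k (f k) \<and> snd (f (Suc k)) = snd (f k) + B (fst (f k))"
  proof (rule dependent_nat_choice)
    obtain n where "3 * (0 + real 0 + 1) < (1/4)^0 * N n"
      using big by blast
    then show "\<exists>x. P 0 x"
      unfolding P_def by (intro exI[of _ "(n, 0)"]) simp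
    fix x k assume "P k x"
    moreover obtain n where "3 * (snd x + B (fst x) + real (Suc k) + 1) < (1/4)^Suc k * N n"
      using big by blast
    ultimately show "\<exists>y. P (Suc k) y \<and> snd y = snd x + B (fst x)"
      unfolding P_def using B[of "fst x"] by (intro exI[of _ "(n, snd x + B (fst x))"]) auto
  qed
  then obtain f where f: "\<And>k. P k (f k)" "\<And>k. snd (f (Suc k)) = snd (f k) + B (fst (f k))"
    by blast
  have S: "(\<Sum>j<k. B (fst (f j))) \<le> snd (f k)" for k
  proof (induction k)
    case 0
    then show ?case
      using f(1)[of 0] by (simp add: P_def)
  next
    case (Suc k)
    then show ?case
      using f(2)[of k] by simp
  qed
  show ?thesis
  proof (rule that[of "\<lambda>k. fst (f k)"])
    show "3 * ((\<Sum>j<k. B (fst (f j))) + real k + 1) < (1/4)^k * N (fst (f k))" for k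
      using f(1)[of k] S[of k] unfolding P_def by argo
  qed
qed

(* Think of a m n as f_m (x_n) for functionals f_m of norm at most 1 with f_n (x_n) = N n = |x_n|. *)
lemma gliding_hump:
  fixes a :: "nat \<Rightarrow> nat \<Rightarrow> real" and N :: "nat \<Rightarrow> real"
  assumes a_le: "\<And>m n. \<bar>a m n\<bar> \<le> N n" and a_diag: "\<And>n. a n n = N n"
    and rows: "\<And>m. Bseq (a m)" and unbounded: "\<not> Bseq N"
  obtains r where "\<not> Bseq (\<lambda>k. \<Sum>j. (1/4)^j * a (r j) (r k))"
proof -
  obtain B where B: "\<And>m n. \<bar>a m n\<bar> \<le> B m"
    using rows unfolding Bseq_def by (metis real_norm_def)
  have B_nonneg: "0 \<le> B m" for m
    using B[of m 0] by linarith
  have N_big: "\<exists>n. K < N n" for K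
  proof (rule ccontr)
    assume "\<nexists>n. K < N n"
    then have "norm (N n) \<le> K" for n
      using a_le[of n n] by (simp add: not_less)
    then show False
      using unbounded BseqI' by blast
  qed
  obtain r where r: "\<And>k. 3 * ((\<Sum>j<k. B (r j)) + real k + 1) < (1/4)^k * N (r k)"
    by (rule gliding_hump_indices[of B N, OF B_nonneg N_big]) blast
  have lower: "real k < (\<Sum>j. (1/4)^j * a (r j) (r k))" for k
  proof -
    define X where "X = (1/4::real)^k * N (r k)"
    have "(\<Sum>j<k. \<bar>a (r j) (r k)\<bar>) \<le> (\<Sum>j<k. B (r j))"
      using B by (rule sum_mono)
    moreover have "2/3 * X - (\<Sum>j<k. \<bar>a (r j) (r k)\<bar>) \<le> (\<Sum>j. (1/4)^j * a (r j) (r k))"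
      unfolding X_def by (rule geometric_weighted_suminf_lower_bound[of "\<lambda>j. a (r j) (r k)", OF a_le a_diag])
    moreover have "3 * ((\<Sum>j<k. B (r j)) + real k + 1) < X"
      using r[of k] by (simp add: X_def)
    moreover have "0 \<le> (\<Sum>j<k. B (r j))"
      using B_nonneg by (rule sum_nonneg)
    ultimately show ?thesis
      using of_nat_0_le_iff[of k, where 'a=real] by argo
  qed
  show ?thesis
  proof (rule that, rule notI)
    assume "Bseq (\<lambda>k. \<Sum>j. (1/4)^j * a (r j) (r k))"
    then obtain K where K: "\<forall>k. norm (\<Sum>j. (1/4)^j * a (r j) (r k)) \<le> K"
      by (rule BseqE)
    define k where "k = nat \<lceil>K\<rceil>"
    have "(\<Sum>j. (1/4)^j * a (r j) (r k)) \<le> real k"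
      using spec[OF K, of k] real_nat_ceiling_ge[of K] unfolding k_def real_norm_def by linarith
    then show False
      using lower[of k] by simp
  qed
qed

lemma Lp_uniform_boundedness:
  assumes p: "p > 1" and V: "\<And>n. V n \<in> Lp_space p M"
    and weak: "\<And>f. Lp_bounded_linear p M f \<Longrightarrow> Bseq (\<lambda>n. f (V n))"
  shows "Bseq (\<lambda>n. Lp_norm p M (V n))"
proof (rule ccontr)
  assume unbounded: "\<not> Bseq (\<lambda>n. Lp_norm p M (V n))"
  define q where "q = p / (p - 1)"
  have pq: "p > 1" "q > 1" "1/p + 1/q = 1"
    using p by (auto simp: q_def field_simps)
  have norming: "\<forall>m. \<exists>\<psi>. \<psi> \<in> Lp_space q M \<and> Lp_norm q M \<psi> \<le> 1 \<and> (\<integral>x. \<psi> x * V m x \<partial>M) = Lp_norm p M (V m)"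
  proof
    fix m
    obtain \<psi> where "\<psi> \<in> Lp_space q M" "Lp_norm q M \<psi> \<le> 1" "(\<integral>x. \<psi> x * V m x \<partial>M) = Lp_norm p M (V m)"
      by (rule Lp_norming_function[OF pq V])
    then show "\<exists>\<psi>. \<psi> \<in> Lp_space q M \<and> Lp_norm q M \<psi> \<le> 1 \<and> (\<integral>x. \<psi> x * V m x \<partial>M) = Lp_norm p M (V m)"
      by blast
  qed
  obtain \<psi> where \<psi>: "\<And>m. \<psi> m \<in> Lp_space q M" "\<And>m. Lp_norm q M (\<psi> m) \<le> 1"
      "\<And>m. (\<integral>x. \<psi> m x * V m x \<partial>M) = Lp_norm p M (V m)"
    using choice[OF norming] by blast
  define f where "f m v = (\<integral>x. \<psi> m x * v x \<partial>M)" for m v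
  have f_lin: "Lp_bounded_linear p M (f m)" for m
    unfolding f_def[abs_def] by (rule Lp_bounded_linear_integral[OF pq \<psi>(1)])
  have f_le: "\<bar>f m v\<bar> \<le> Lp_norm p M v" if "v \<in> Lp_space p M" for m v
  proof -
    have "\<bar>f m v\<bar> \<le> Lp_norm q M (\<psi> m) * Lp_norm p M v"
      unfolding f_def by (rule Lp_pairing_bound[OF pq \<psi>(1) that])
    also have "\<dots> \<le> 1 * Lp_norm p M v"
      by (rule mult_right_mono[OF \<psi>(2) Lp_norm_nonneg])
    finally show ?thesis
      by simp
  qed
  have diag: "f n (V n) = Lp_norm p M (V n)" for n
    unfolding f_def by (rule \<psi>(3))
  obtain r where r: "\<not> Bseq (\<lambda>k. \<Sum>j. (1/4)^j * f (r j) (V (r k)))"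
    by (rule gliding_hump[of "\<lambda>m n. f m (V n)", OF f_le[OF V] diag weak[OF f_lin] unbounded])
  have "summable (\<lambda>j. \<bar>(1/4::real)^j\<bar>)"
    by (simp add: summable_geometric)
  then have "Lp_bounded_linear p M (\<lambda>v. \<Sum>j. (1/4)^j * f (r j) v)"
    using Lp_bounded_linear_suminf[of p M "\<lambda>j. f (r j)" "\<lambda>j. (1/4)^j"] f_lin f_le by simp
  then have "Bseq (\<lambda>k. \<Sum>j. (1/4)^j * f (r j) (V (r k)))"
    by (rule Bseq_subseq[OF weak])
  with r show False ..
qed

section \<open>Integrals against uniformly Lipschitz kernels\<close>

lemma compact_partition_small_sets:
  fixes S :: "'a::metric_space set"
  assumes "compact S" "\<delta> > 0"
  obtains m :: nat and c :: "nat \<Rightarrow> 'a" and Q :: "nat \<Rightarrow> 'a set"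
  where "\<And>i. Q i \<in> sets borel" "\<And>i. Q i \<subseteq> S"
    "\<And>y. (\<Sum>i<m. indicator (Q i) y) = (indicator S y :: real)"
    "\<And>i y. i < m \<Longrightarrow> y \<in> Q i \<Longrightarrow> dist y (c i) < \<delta>"
proof -
  obtain C where C: "C \<subseteq> S" "finite C" "S \<subseteq> (\<Union>x\<in>C. ball x \<delta>)"
    by (rule compactE_image[OF assms(1), of S "\<lambda>x. ball x \<delta>"]) (use assms(2) in auto)
  define m where "m = card C"
  obtain c where c: "c ` {..<m} = C"
    using ex_bij_betw_nat_finite[OF C(2)] by (auto simp: m_def atLeast0LessThan bij_betw_def)
  define A where "A i = (if i < m then S \<inter> ball (c i) \<delta> else {})" for i
  define Q where "Q = disjointed A"
  have Q_sub: "Q i \<subseteq> A i" for i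
    unfolding Q_def by (rule disjointed_subset)
  have "(\<Union>i<m. Q i) = (\<Union>i<m. A i)"
    using finite_UN_disjointed_eq[of A m] by (simp add: Q_def atLeast0LessThan)
  also have "\<dots> = S \<inter> (\<Union>x\<in>c ` {..<m}. ball x \<delta>)"
    by (auto simp: A_def)
  also have "\<dots> = S"
    using C(3) c by auto
  finally have cover: "(\<Union>i<m. Q i) = S" .
  show ?thesis
  proof (rule that)
    have "A i \<in> sets borel" for i
      using compact_imp_closed[OF assms(1)] by (simp add: A_def borel_closed)
    then show "Q i \<in> sets borel" for i
      using sets.range_disjointed_sets[of A borel] unfolding Q_def by auto
    show "Q i \<subseteq> S" for i
      using Q_sub[of i] by (auto simp: A_def split: if_splits)
    have "disjoint_family_on Q {..<m}"
      unfolding Q_def by (rule disjoint_family_on_mono[OF subset_UNIV disjoint_family_disjointed])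
    then have "(indicator (\<Union>i<m. Q i) y :: real) = (\<Sum>i<m. indicator (Q i) y)" for y
      by (intro indicator_UN_disjoint) simp_all
    then show "(\<Sum>i<m. indicator (Q i) y) = (indicator S y :: real)" for y
      by (simp add: cover)
    show "dist y (c i) < \<delta>" if "i < m" "y \<in> Q i" for i y
      using Q_sub[of i] that by (auto simp: A_def dist_commute)
  qed
qed

lemma step_approx_on_partition_le:
  fixes K :: "'a::metric_space \<Rightarrow> real"
  assumes lip: "\<And>y y'. \<bar>K y - K y'\<bar> \<le> L * dist y y'"
    and partition: "(\<Sum>i<m. indicator (Q i) y) = (indicator S y :: real)"
    and small: "\<And>i. i < m \<Longrightarrow> y \<in> Q i \<Longrightarrow> dist y (c i) < \<delta>" and \<delta>: "0 \<le> \<delta>"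
  shows "\<bar>K y * t - (\<Sum>i<m. K (c i) * (indicator (Q i) y * t))\<bar>
           \<le> \<bar>L\<bar> * \<delta> * \<bar>t\<bar> + \<bar>K y * t\<bar> * indicator (- S) y"
proof -
  have "K y * t = K y * t * indicator (- S) y + K y * t * (\<Sum>i<m. indicator (Q i) y)"
    using partition by (simp add: indicator_def)
  moreover have "(\<Sum>i<m. (K y - K (c i)) * indicator (Q i) y) * t
      = (\<Sum>i<m. K y * t * indicator (Q i) y - K (c i) * (indicator (Q i) y * t))"
    unfolding sum_distrib_right by (intro sum.cong) (simp_all add: algebra_simps)
  moreover have "\<dots> = K y * t * (\<Sum>i<m. indicator (Q i) y) - (\<Sum>i<m. K (c i) * (indicator (Q i) y * t))"
    by (simp add: sum_subtractf sum_distrib_left)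
  ultimately have eq: "K y * t - (\<Sum>i<m. K (c i) * (indicator (Q i) y * t))
      = K y * t * indicator (- S) y + (\<Sum>i<m. (K y - K (c i)) * indicator (Q i) y) * t"
    by linarith
  have "\<bar>K y - K (c i)\<bar> * indicator (Q i) y \<le> \<bar>L\<bar> * \<delta> * indicator (Q i) y" if "i < m" for i
  proof (cases "y \<in> Q i")
    case True
    have "\<bar>K y - K (c i)\<bar> \<le> \<bar>L\<bar> * dist y (c i)"
      using lip[of y "c i"] abs_ge_self[of L] by (meson order_trans mult_right_mono zero_le_dist)
    also have "\<dots> \<le> \<bar>L\<bar> * \<delta>"
      using small[OF that True] by (intro mult_left_mono) auto
    finally show ?thesis
      using True by simp
  qed simp
  then have "\<bar>\<Sum>i<m. (K y - K (c i)) * indicator (Q i) y\<bar> \<le> (\<Sum>i<m. \<bar>L\<bar> * \<delta> * indicator (Q i) y)"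
    by (intro order_trans[OF sum_abs sum_mono]) (simp add: abs_mult)
  also have "\<dots> = \<bar>L\<bar> * \<delta> * indicator S y"
    by (simp add: sum_distrib_left[symmetric] partition)
  also have "\<dots> \<le> \<bar>L\<bar> * \<delta>"
    using \<delta> by (cases "y \<in> S") (auto simp: indicator_def)
  finally have "\<bar>(\<Sum>i<m. (K y - K (c i)) * indicator (Q i) y) * t\<bar> \<le> \<bar>L\<bar> * \<delta> * \<bar>t\<bar>"
    unfolding abs_mult by (rule mult_right_mono) simp
  moreover have "\<bar>K y * t * indicator (- S) y\<bar> = \<bar>K y * t\<bar> * indicator (- S) y"
    by (simp add: abs_mult)
  ultimately show ?thesis
    unfolding eq using abs_triangle_ineq by (smt (verit))
qed

lemma integral_approx_on_partition:
  fixes K g :: "'a::euclidean_space \<Rightarrow> real"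
  assumes lip: "\<And>y y'. \<bar>K y - K y'\<bar> \<le> L * dist y y'"
    and g: "integrable lborel g" and Kg: "integrable lborel (\<lambda>y. K y * g y)"
    and Q: "\<And>i. Q i \<in> sets lborel" and S: "S \<in> sets lborel"
    and partition: "\<And>y. (\<Sum>i<m. indicator (Q i) y) = (indicator S y :: real)"
    and small: "\<And>i y. i < m \<Longrightarrow> y \<in> Q i \<Longrightarrow> dist y (c i) < \<delta>" and \<delta>: "0 \<le> \<delta>"
  shows "\<bar>(\<integral>y. K y * g y \<partial>lborel) - (\<Sum>i<m. K (c i) * (\<integral>y. indicator (Q i) y * g y \<partial>lborel))\<bar>
           \<le> \<bar>L\<bar> * \<delta> * (\<integral>y. \<bar>g y\<bar> \<partial>lborel) + (\<integral>y. \<bar>K y * g y\<bar> * indicator (- S) y \<partial>lborel)"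
proof -
  have gQ: "integrable lborel (\<lambda>y. indicator (Q i) y * g y)" for i
    using integrable_mult_indicator[OF Q g] by simp
  define E where "E y = K y * g y - (\<Sum>i<m. K (c i) * (indicator (Q i) y * g y))" for y
  have E_int: "integrable lborel E"
    unfolding E_def using Kg gQ by simp
  have E_integral: "(\<integral>y. E y \<partial>lborel)
      = (\<integral>y. K y * g y \<partial>lborel) - (\<Sum>i<m. K (c i) * (\<integral>y. indicator (Q i) y * g y \<partial>lborel))"
    unfolding E_def using Kg gQ by (simp add: Bochner_Integration.integral_sum)
  have tail_int: "integrable lborel (\<lambda>y. \<bar>K y * g y\<bar> * indicator (- S) y)"
    using Kg S integrable_mult_indicator[of "- S" lborel "\<lambda>y. \<bar>K y * g y\<bar>"] by (simp add: mult.commute)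
  have g_int: "integrable lborel (\<lambda>y. \<bar>L\<bar> * \<delta> * \<bar>g y\<bar>)"
    using g by simp
  have "\<bar>\<integral>y. E y \<partial>lborel\<bar> \<le> (\<integral>y. \<bar>L\<bar> * \<delta> * \<bar>g y\<bar> + \<bar>K y * g y\<bar> * indicator (- S) y \<partial>lborel)"
  proof (rule order_trans[OF integral_abs_bound integral_mono])
    show "integrable lborel (\<lambda>y. \<bar>E y\<bar>)"
      using integrable_abs[OF E_int] .
    show "integrable lborel (\<lambda>y. \<bar>L\<bar> * \<delta> * \<bar>g y\<bar> + \<bar>K y * g y\<bar> * indicator (- S) y)"
      using g_int tail_int by (rule Bochner_Integration.integrable_add)
    show "\<bar>E y\<bar> \<le> \<bar>L\<bar> * \<delta> * \<bar>g y\<bar> + \<bar>K y * g y\<bar> * indicator (- S) y" for y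
      unfolding E_def by (rule step_approx_on_partition_le[OF lip partition small \<delta>])
  qed
  also have "\<dots> = \<bar>L\<bar> * \<delta> * (\<integral>y. \<bar>g y\<bar> \<partial>lborel) + (\<integral>y. \<bar>K y * g y\<bar> * indicator (- S) y \<partial>lborel)"
    using g_int tail_int by simp
  finally show ?thesis
    using E_integral by simp
qed

lemma Lipschitz_kernel_integral_tendsto_zero:
  fixes K g :: "nat \<Rightarrow> 'a::euclidean_space \<Rightarrow> real"
  assumes lip: "\<And>n y y'. \<bar>K n y - K n y'\<bar> \<le> L * dist y y'"
    and K_le: "\<And>n y. \<bar>K n y\<bar> \<le> k y"
    and g: "\<And>n. integrable lborel (g n)" and Kg: "\<And>n. integrable lborel (\<lambda>y. K n y * g n y)"
    and g_L1: "\<And>n. (\<integral>y. \<bar>g n y\<bar> \<partial>lborel) \<le> C"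
    and local: "\<And>Q. Q \<in> sets lborel \<Longrightarrow> bounded Q \<Longrightarrow> (\<lambda>n. \<integral>y. indicator Q y * g n y \<partial>lborel) \<longlonglongrightarrow> 0"
    and tail: "\<And>e. e > 0 \<Longrightarrow> \<exists>R. \<forall>n. (\<integral>y. \<bar>K n y * g n y\<bar> * indicator (- cball 0 R) y \<partial>lborel) \<le> e"
  shows "(\<lambda>n. \<integral>y. K n y * g n y \<partial>lborel) \<longlonglongrightarrow> 0"
proof (rule LIMSEQ_I)
  fix e :: real assume e: "e > 0"
  obtain R where R: "\<And>n. (\<integral>y. \<bar>K n y * g n y\<bar> * indicator (- cball 0 R) y \<partial>lborel) \<le> e / 3"
    using tail[of "e / 3"] e by auto
  have C: "0 \<le> C"
    by (rule order_trans[OF integral_nonneg_AE g_L1]) simp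
  define \<delta> where "\<delta> = e / (3 * (\<bar>L\<bar> * C + 1))"
  have \<delta>: "\<delta> > 0" "\<bar>L\<bar> * \<delta> * C < e / 3"
    using e mult_nonneg_nonneg[OF abs_ge_zero C, of L] by (auto simp: \<delta>_def field_simps)
  obtain m and c :: "nat \<Rightarrow> 'a" and Q where Q: "\<And>i. Q i \<in> sets borel" "\<And>i. Q i \<subseteq> cball 0 R"
    and partition: "\<And>y. (\<Sum>i<m. indicator (Q i) y) = (indicator (cball 0 R) y :: real)"
    and small: "\<And>i y. i < m \<Longrightarrow> y \<in> Q i \<Longrightarrow> dist y (c i) < \<delta>"
    by (rule compact_partition_small_sets[OF compact_cball[of 0 R] \<delta>(1)]) blast
  have "(\<lambda>n. K n (c i) * (\<integral>y. indicator (Q i) y * g n y \<partial>lborel)) \<longlonglongrightarrow> 0" for i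
  proof (rule Lim_null_comparison)
    show "\<forall>\<^sub>F n in sequentially. norm (K n (c i) * (\<integral>y. indicator (Q i) y * g n y \<partial>lborel))
        \<le> k (c i) * \<bar>\<integral>y. indicator (Q i) y * g n y \<partial>lborel\<bar>"
      using K_le by (intro always_eventually allI) (simp add: abs_mult mult_right_mono)
    show "(\<lambda>n. k (c i) * \<bar>\<integral>y. indicator (Q i) y * g n y \<partial>lborel\<bar>) \<longlonglongrightarrow> 0"
      using local[of "Q i"] Q bounded_subset[OF bounded_cball Q(2)]
      by (intro tendsto_mult_right_zero tendsto_rabs_zero) simp
  qed
  then have "(\<lambda>n. \<Sum>i<m. K n (c i) * (\<integral>y. indicator (Q i) y * g n y \<partial>lborel)) \<longlonglongrightarrow> 0"
    by (rule tendsto_null_sum)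
  from LIMSEQ_D[OF this, of "e / 3"] e obtain N
    where N: "\<And>n. n \<ge> N \<Longrightarrow> \<bar>\<Sum>i<m. K n (c i) * (\<integral>y. indicator (Q i) y * g n y \<partial>lborel)\<bar> < e / 3"
    by auto
  show "\<exists>N. \<forall>n\<ge>N. norm ((\<integral>y. K n y * g n y \<partial>lborel) - 0) < e"
  proof (intro exI allI impI)
    fix n assume "n \<ge> N"
    have "\<bar>(\<integral>y. K n y * g n y \<partial>lborel) - (\<Sum>i<m. K n (c i) * (\<integral>y. indicator (Q i) y * g n y \<partial>lborel))\<bar>
        \<le> \<bar>L\<bar> * \<delta> * (\<integral>y. \<bar>g n y\<bar> \<partial>lborel) + (\<integral>y. \<bar>K n y * g n y\<bar> * indicator (- cball 0 R) y \<partial>lborel)"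
      by (rule integral_approx_on_partition[OF lip g Kg _ _ partition small])
        (use Q(1) \<delta>(1) in auto)
    moreover have "\<bar>L\<bar> * \<delta> * (\<integral>y. \<bar>g n y\<bar> \<partial>lborel) \<le> \<bar>L\<bar> * \<delta> * C"
      using g_L1[of n] \<delta>(1) by (intro mult_left_mono) auto
    ultimately show "norm ((\<integral>y. K n y * g n y \<partial>lborel) - 0) < e"
      using N[OF \<open>n \<ge> N\<close>] R[of n] \<delta>(2) by simp
  qed
qed

section \<open>The logarithmic weight\<close>

definition log_weight :: "'a::real_normed_vector \<Rightarrow> real" where
  "log_weight x = 1 + ln (1 + norm x)"

abbreviation log_weighted_lborel :: "'a::euclidean_space measure" where
  "log_weighted_lborel \<equiv> density lborel log_weight"

lemma log_weight_ge_1: "1 \<le> log_weight x"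
  by (simp add: log_weight_def)

lemma abs_log_weight[simp]: "\<bar>log_weight x\<bar> = log_weight x"
  using log_weight_ge_1[of x] by simp

lemma log_weight_neq_0[simp]: "log_weight x \<noteq> 0"
  using log_weight_ge_1[of x] by simp

lemma borel_measurable_log_weight[measurable]: "log_weight \<in> borel_measurable borel"
  unfolding log_weight_def by measurable

lemma integrable_log_weighted_lborel:
  "f \<in> borel_measurable lborel \<Longrightarrow>
    integrable log_weighted_lborel f \<longleftrightarrow> integrable lborel (\<lambda>x. log_weight x * f x)"
  using log_weight_ge_1 by (subst integrable_density) (auto intro: order_trans[OF zero_le_one])

lemma integral_log_weighted_lborel:
  "f \<in> borel_measurable lborel \<Longrightarrow>
    (\<integral>x. f x \<partial>log_weighted_lborel) = (\<integral>x. log_weight x * f x \<partial>lborel)"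
  using log_weight_ge_1 by (subst integral_density) (auto intro: order_trans[OF zero_le_one])

lemma Lp_space_log_weightD:
  assumes "v \<in> Lp_space p log_weighted_lborel"
  shows "v \<in> borel_measurable lborel"
    and "integrable lborel (\<lambda>x. log_weight x * \<bar>v x\<bar> powr p)"
    and "(\<integral>x. log_weight x * \<bar>v x\<bar> powr p \<partial>lborel) = (\<integral>x. \<bar>v x\<bar> powr p \<partial>log_weighted_lborel)"
proof -
  show v: "v \<in> borel_measurable lborel"
    using Lp_spaceD(1)[OF assms] by simp
  show "integrable lborel (\<lambda>x. log_weight x * \<bar>v x\<bar> powr p)"
    using Lp_spaceD(2)[OF assms] v by (simp add: integrable_log_weighted_lborel)
  show "(\<integral>x. log_weight x * \<bar>v x\<bar> powr p \<partial>lborel) = (\<integral>x. \<bar>v x\<bar> powr p \<partial>log_weighted_lborel)"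
    using v by (simp add: integral_log_weighted_lborel)
qed

lemma Xsp_imp_Lp_log_weight:
  assumes p: "p > 0" and v: "v \<in> Xsp s p"
  shows "v \<in> Lp_space p log_weighted_lborel"
    and "Lp_norm p log_weighted_lborel v \<le> normX s p v"
proof -
  have [measurable]: "v \<in> borel_measurable lborel"
    and G: "gagliardo_pow s p v < \<infinity>" and L: "Lp_pow p v < \<infinity>" and Lg: "log_pow p v < \<infinity>"
    using v unfolding Xsp_def Wsp_def by auto
  have int_L: "integrable lborel (\<lambda>x. \<bar>v x\<bar> powr p)"
    using L unfolding Lp_pow_def by (intro integrableI_bounded) auto
  have int_W: "integrable lborel (\<lambda>x. ln (1 + norm x) * \<bar>v x\<bar> powr p)"
    using Lg unfolding log_pow_def by (intro integrableI_bounded) (auto simp: abs_mult)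
  have split: "log_weight x * \<bar>v x\<bar> powr p = \<bar>v x\<bar> powr p + ln (1 + norm x) * \<bar>v x\<bar> powr p" for x
    by (simp add: log_weight_def algebra_simps)
  show "v \<in> Lp_space p log_weighted_lborel"
    using int_L int_W unfolding Lp_space_def by (simp add: integrable_log_weighted_lborel split)
  have "(\<integral>x. \<bar>v x\<bar> powr p \<partial>log_weighted_lborel)
      = (\<integral>x. \<bar>v x\<bar> powr p \<partial>lborel) + (\<integral>x. ln (1 + norm x) * \<bar>v x\<bar> powr p \<partial>lborel)"
    by (simp add: integral_log_weighted_lborel split Bochner_Integration.integral_add[OF int_L int_W])
  also have "\<dots> = enn2real (Lp_pow p v + log_pow p v)"
    unfolding Lp_pow_def log_pow_def using int_L int_W
    by (simp add: nn_integral_eq_integral integral_nonneg_AE flip: ennreal_plus)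
  also have "\<dots> \<le> enn2real (gagliardo_pow s p v + Lp_pow p v + log_pow p v)"
    using G L Lg by (intro enn2real_mono) (auto simp: add.assoc ennreal_add_less_top)
  finally show "Lp_norm p log_weighted_lborel v \<le> normX s p v"
    unfolding Lp_norm_def normX_def using p by (intro powr_mono2) (auto intro: integral_nonneg_AE)
qed

lemma weak_convX_imp_Lp_log_weight_tendsto:
  fixes U :: "nat \<Rightarrow> 'a::euclidean_space \<Rightarrow> real"
  assumes p: "p > 0" and weak: "weak_convX s p U u"
    and f: "Lp_bounded_linear p log_weighted_lborel f"
  shows "(\<lambda>n. f (U n)) \<longlonglongrightarrow> f u"
proof -
  obtain C where C: "\<And>v. v \<in> Lp_space p log_weighted_lborel \<Longrightarrow>
      \<bar>f v\<bar> \<le> C * Lp_norm p log_weighted_lborel v"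
    using f unfolding Lp_bounded_linear_def by blast
  have "f \<in> dualX s p"
    unfolding dualX_def
  proof (intro CollectI conjI ballI allI exI)
    fix v w :: "'a \<Rightarrow> real" and a b :: real
    assume "v \<in> Xsp s p" "w \<in> Xsp s p"
    then show "f (\<lambda>x. a * v x + b * w x) = a * f v + b * f w"
      using f Xsp_imp_Lp_log_weight(1)[OF p] unfolding Lp_bounded_linear_def by blast
  next
    fix v :: "'a \<Rightarrow> real" assume v: "v \<in> Xsp s p"
    have "\<bar>f v\<bar> \<le> C * Lp_norm p log_weighted_lborel v"
      using C Xsp_imp_Lp_log_weight(1)[OF p v] .
    also have "\<dots> \<le> max C 0 * Lp_norm p log_weighted_lborel v"
      by (rule mult_right_mono[OF max.cobounded1 Lp_norm_nonneg])
    also have "\<dots> \<le> max C 0 * normX s p v"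
      by (rule mult_left_mono[OF Xsp_imp_Lp_log_weight(2)[OF p v] max.cobounded2])
    finally show "\<bar>f v\<bar> \<le> max C 0 * normX s p v" .
  qed
  then show ?thesis
    using weak unfolding weak_convX_def by blast
qed

lemma log_weight_Holder_diff:
  assumes pq: "p > 1" "q > 1" "1/p + 1/q = 1"
    and \<xi>: "\<xi> \<in> Lp_space q log_weighted_lborel"
    and f: "f \<in> Lp_space p log_weighted_lborel" and g: "g \<in> Lp_space p log_weighted_lborel"
  defines "C \<equiv> Lp_norm q log_weighted_lborel \<xi>
      * (Lp_norm p log_weighted_lborel f + Lp_norm p log_weighted_lborel g)"
  shows "integrable lborel (\<lambda>y. log_weight y * (\<xi> y * (f y - g y)))"
    and "(\<integral>y. log_weight y * \<bar>\<xi> y * (f y - g y)\<bar> \<partial>lborel) \<le> C"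
    and "integrable lborel (\<lambda>y. \<xi> y * (f y - g y))"
    and "(\<integral>y. \<bar>\<xi> y * (f y - g y)\<bar> \<partial>lborel) \<le> C"
proof -
  have [measurable]: "\<xi> \<in> borel_measurable lborel" "f \<in> borel_measurable lborel" "g \<in> borel_measurable lborel"
    using Lp_space_log_weightD(1) \<xi> f g by blast+
  note H = Holder_inequality_diff[OF pq \<xi> f g]
  show int_w: "integrable lborel (\<lambda>y. log_weight y * (\<xi> y * (f y - g y)))"
    using H(1) by (simp add: integrable_log_weighted_lborel)
  show le_w: "(\<integral>y. log_weight y * \<bar>\<xi> y * (f y - g y)\<bar> \<partial>lborel) \<le> C"
    using H(2) by (simp add: integral_log_weighted_lborel C_def)
  have pt: "\<bar>\<xi> y * (f y - g y)\<bar> \<le> \<bar>log_weight y * (\<xi> y * (f y - g y))\<bar>" for y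
    using mult_right_mono[OF log_weight_ge_1[of y] abs_ge_zero[of "\<xi> y * (f y - g y)"]] by (simp add: abs_mult)
  show int: "integrable lborel (\<lambda>y. \<xi> y * (f y - g y))"
    by (rule Bochner_Integration.integrable_bound[OF int_w]) (use pt in \<open>auto intro: AE_I2\<close>)
  have "(\<integral>y. \<bar>\<xi> y * (f y - g y)\<bar> \<partial>lborel) \<le> (\<integral>y. \<bar>log_weight y * (\<xi> y * (f y - g y))\<bar> \<partial>lborel)"
    using integrable_abs[OF int] integrable_abs[OF int_w] pt by (rule integral_mono)
  then show "(\<integral>y. \<bar>\<xi> y * (f y - g y)\<bar> \<partial>lborel) \<le> C"
    using le_w by (simp add: abs_mult)
qed

lemma log_weight_local_weak_limit:
  assumes pq: "p > 1" "q > 1" "1/p + 1/q = 1"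
    and h: "h \<in> Lp_space q log_weighted_lborel"
    and V: "\<And>n. V n \<in> Lp_space p log_weighted_lborel" and v: "v \<in> Lp_space p log_weighted_lborel"
    and weak: "\<And>f. Lp_bounded_linear p log_weighted_lborel f \<Longrightarrow> (\<lambda>n. f (V n)) \<longlonglongrightarrow> f v"
    and Q: "Q \<in> sets lborel"
  shows "(\<lambda>n. \<integral>y. indicator Q y * (h y * (V n y - v y)) \<partial>lborel) \<longlonglongrightarrow> 0"
proof -
  have [measurable]: "h \<in> borel_measurable lborel" "Q \<in> sets lborel"
    using Lp_space_log_weightD(1)[OF h] Q by auto
  define \<phi> where "\<phi> y = indicator Q y * h y / log_weight y" for y
  have \<phi>: "\<phi> \<in> Lp_space q log_weighted_lborel"
  proof (rule Lp_space_dominated(1)[OF h])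
    show "\<phi> \<in> borel_measurable log_weighted_lborel"
      unfolding \<phi>_def by simp
    show "\<bar>\<phi> y\<bar> \<le> \<bar>h y\<bar>" for y
      using log_weight_ge_1[of y]
      by (auto simp: \<phi>_def abs_mult indicator_def divide_le_eq mult_le_cancel_left1)
  qed (use pq in simp)
  define F where "F u = (\<integral>y. \<phi> y * u y \<partial>log_weighted_lborel)" for u
  have "(\<lambda>n. F (V n) - F v) \<longlonglongrightarrow> F v - F v"
    unfolding F_def by (intro tendsto_diff weak Lp_bounded_linear_integral[OF pq \<phi>] tendsto_const)
  moreover have "F (V n) - F v = (\<integral>y. indicator Q y * (h y * (V n y - v y)) \<partial>lborel)" for n
  proof -
    have "F (V n) - F v = (\<integral>y. \<phi> y * (V n y - v y) \<partial>log_weighted_lborel)"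
      unfolding F_def using Holder_inequality_diff(1)[OF pq \<phi> V v]
        Holder_inequality(1)[OF pq V \<phi>] Holder_inequality(1)[OF pq v \<phi>]
      by (simp add: algebra_simps)
    also have "\<dots> = (\<integral>y. indicator Q y * (h y * (V n y - v y)) \<partial>lborel)"
      using Lp_space_log_weightD(1)[OF V] Lp_space_log_weightD(1)[OF v] log_weight_ge_1
      by (subst integral_log_weighted_lborel) (auto simp: \<phi>_def intro!: Bochner_Integration.integral_cong)
    finally show ?thesis .
  qed
  ultimately show ?thesis
    by simp
qed

section \<open>The logarithmic potential\<close>

lemma ln_one_plus_diff_le:
  fixes a b :: real
  assumes "0 \<le> a" "0 \<le> b"
  shows "\<bar>ln (1 + a) - ln (1 + b)\<bar> \<le> \<bar>a - b\<bar>"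
proof -
  have le: "ln (1 + a) - ln (1 + b) \<le> a - b" if "0 \<le> b" "b \<le> a" for a b :: real
  proof -
    have "ln (1 + a) - ln (1 + b) = ln ((1 + a) / (1 + b))"
      using that by (simp add: ln_div)
    also have "\<dots> \<le> (1 + a) / (1 + b) - 1"
      using that by (intro ln_le_minus_one) auto
    also have "\<dots> = (a - b) / (1 + b)"
      using that by (simp add: field_simps)
    also have "\<dots> \<le> a - b"
      using divide_left_mono[of 1 "1 + b" "a - b"] that by simp
    finally show ?thesis .
  qed
  show ?thesis
  proof (cases "b \<le> a")
    case True
    then show ?thesis
      using le[of b a] assms by simp
  next
    case False
    then show ?thesis
      using le[of a b] assms by simp
  qed
qed

lemma ln_one_plus_norm_diff_lipschitz:
  fixes x y y' :: "'a::real_normed_vector"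
  shows "\<bar>ln (1 + norm (x - y)) - ln (1 + norm (x - y'))\<bar> \<le> dist y y'"
proof -
  have "\<bar>norm (x - y) - norm (x - y')\<bar> \<le> norm ((x - y) - (x - y'))"
    by (rule norm_triangle_ineq3)
  then show ?thesis
    using ln_one_plus_diff_le[of "norm (x - y)" "norm (x - y')"]
    by (simp add: dist_norm norm_minus_commute)
qed

lemma ln_one_plus_norm_diff_le:
  fixes x y :: "'a::real_normed_vector"
  shows "ln (1 + norm (x - y)) \<le> log_weight x * log_weight y"
proof -
  have "(1 + norm x) * (1 + norm y) = 1 + norm x + norm y + norm x * norm y"
    by (simp add: algebra_simps)
  then have "1 + norm (x - y) \<le> (1 + norm x) * (1 + norm y)"
    using norm_triangle_ineq4[of x y] mult_nonneg_nonneg[OF norm_ge_zero[of x] norm_ge_zero[of y]]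
    by linarith
  then have "ln (1 + norm (x - y)) \<le> ln ((1 + norm x) * (1 + norm y))"
    by (intro ln_mono) (auto intro: add_pos_nonneg)
  also have "\<dots> = ln (1 + norm x) + ln (1 + norm y)"
    by (rule ln_mult_pos) (auto intro: add_pos_nonneg)
  also have "\<dots> \<le> log_weight x * log_weight y"
    by (simp add: log_weight_def algebra_simps)
  finally show ?thesis .
qed

lemma log_kernel_le:
  fixes x y :: "'a::real_normed_vector"
  assumes "0 \<le> c"
  shows "ln (1 + norm (x - y)) * c \<le> log_weight y * (log_weight x * c)"
  using mult_right_mono[OF ln_one_plus_norm_diff_le assms] by (simp add: mult_ac)

definition log_potential :: "('a::euclidean_space \<Rightarrow> real) \<Rightarrow> 'a \<Rightarrow> real" where
  "log_potential f y = (\<integral>x. ln (1 + norm (x - y)) * f x \<partial>lborel)"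

lemma integrable_log_kernel:
  assumes f: "\<And>x. 0 \<le> f x" "f \<in> borel_measurable lborel" "integrable lborel (\<lambda>x. log_weight x * f x)"
  shows "integrable lborel (\<lambda>x. ln (1 + norm (x - y)) * f x)"
proof (rule Bochner_Integration.integrable_bound)
  show "integrable lborel (\<lambda>x. log_weight y * (log_weight x * f x))"
    using f(3) by simp
  show "(\<lambda>x. ln (1 + norm (x - y)) * f x) \<in> borel_measurable lborel"
    using f(2) by measurable
  show "AE x in lborel. norm (ln (1 + norm (x - y)) * f x) \<le> norm (log_weight y * (log_weight x * f x))"
    using log_kernel_le[OF f(1)] order_trans[OF zero_le_one log_weight_ge_1] f(1)
    by (intro AE_I2) (simp add: abs_mult)
qed

lemma log_potential_bounds:
  assumes f: "\<And>x. 0 \<le> f x" "f \<in> borel_measurable lborel" "integrable lborel (\<lambda>x. log_weight x * f x)"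
  shows "0 \<le> log_potential f y"
    and "log_potential f y \<le> (\<integral>x. log_weight x * f x \<partial>lborel) * log_weight y"
proof -
  show "0 \<le> log_potential f y"
    unfolding log_potential_def using f(1) by (intro integral_nonneg_AE) auto
  have "log_potential f y \<le> (\<integral>x. log_weight y * (log_weight x * f x) \<partial>lborel)"
    unfolding log_potential_def using integrable_log_kernel[OF f] f(3) log_kernel_le[OF f(1)]
    by (intro integral_mono) auto
  then show "log_potential f y \<le> (\<integral>x. log_weight x * f x \<partial>lborel) * log_weight y"
    by (simp add: mult.commute)
qed

lemma log_potential_lipschitz:
  assumes f: "\<And>x. 0 \<le> f x" "f \<in> borel_measurable lborel" "integrable lborel (\<lambda>x. log_weight x * f x)"
  shows "\<bar>log_potential f y - log_potential f y'\<bar> \<le> (\<integral>x. log_weight x * f x \<partial>lborel) * dist y y'"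
proof -
  have f_le: "f x \<le> log_weight x * f x" for x
    using mult_right_mono[OF log_weight_ge_1 f(1)] by simp
  then have int_f: "integrable lborel f"
    by (intro Bochner_Integration.integrable_bound[OF f(3) f(2)] AE_I2) (simp add: f(1) abs_mult)
  have "\<bar>log_potential f y - log_potential f y'\<bar>
      = \<bar>\<integral>x. (ln (1 + norm (x - y)) - ln (1 + norm (x - y'))) * f x \<partial>lborel\<bar>"
    unfolding log_potential_def using integrable_log_kernel[OF f, of y] integrable_log_kernel[OF f, of y']
    by (simp add: left_diff_distrib)
  also have "\<dots> \<le> (\<integral>x. \<bar>(ln (1 + norm (x - y)) - ln (1 + norm (x - y'))) * f x\<bar> \<partial>lborel)"
    by (rule integral_abs_bound)
  also have "\<dots> \<le> (\<integral>x. dist y y' * f x \<partial>lborel)"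
  proof (rule integral_mono)
    show "integrable lborel (\<lambda>x. \<bar>(ln (1 + norm (x - y)) - ln (1 + norm (x - y'))) * f x\<bar>)"
      using integrable_log_kernel[OF f, of y] integrable_log_kernel[OF f, of y']
      by (simp add: left_diff_distrib)
    show "integrable lborel (\<lambda>x. dist y y' * f x)"
      using int_f by simp
    show "\<bar>(ln (1 + norm (x - y)) - ln (1 + norm (x - y'))) * f x\<bar> \<le> dist y y' * f x" for x
      using mult_right_mono[OF ln_one_plus_norm_diff_lipschitz f(1)] f(1) by (simp add: abs_mult)
  qed
  also have "\<dots> = (\<integral>x. f x \<partial>lborel) * dist y y'"
    by (simp add: mult.commute)
  also have "\<dots> \<le> (\<integral>x. log_weight x * f x \<partial>lborel) * dist y y'"
    using int_f f(3) f_le by (intro mult_right_mono integral_mono) auto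
  finally show ?thesis .
qed

lemma nn_integral_log_kernel:
  assumes f: "\<And>x. 0 \<le> f x" "f \<in> borel_measurable lborel" "integrable lborel (\<lambda>x. log_weight x * f x)"
  shows "(\<integral>\<^sup>+ x. ennreal \<bar>ln (1 + norm (x - y)) * f x * c\<bar> \<partial>lborel) = ennreal (\<bar>c\<bar> * log_potential f y)"
proof -
  note [measurable] = f(2)
  have "(\<integral>\<^sup>+ x. ennreal \<bar>ln (1 + norm (x - y)) * f x * c\<bar> \<partial>lborel)
      = (\<integral>\<^sup>+ x. ennreal \<bar>c\<bar> * ennreal (ln (1 + norm (x - y)) * f x) \<partial>lborel)"
    using f(1) by (intro nn_integral_cong) (simp add: abs_mult ennreal_mult'[symmetric] mult.commute)
  also have "\<dots> = ennreal \<bar>c\<bar> * (\<integral>\<^sup>+ x. ennreal (ln (1 + norm (x - y)) * f x) \<partial>lborel)"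
    by (rule nn_integral_cmult) measurable
  also have "\<dots> = ennreal \<bar>c\<bar> * ennreal (log_potential f y)"
    unfolding log_potential_def using integrable_log_kernel[OF f] f(1)
    by (subst nn_integral_eq_integral) auto
  finally show ?thesis
    by (simp add: ennreal_mult log_potential_bounds(1)[OF f])
qed

lemma log_kernel_product:
  assumes f: "\<And>x. 0 \<le> f x" "f \<in> borel_measurable lborel" "integrable lborel (\<lambda>x. log_weight x * f x)"
    and g: "g \<in> borel_measurable lborel" "integrable lborel (\<lambda>y. log_weight y * g y)"
  shows "integrable (lborel \<Otimes>\<^sub>M lborel) (\<lambda>(x, y). ln (1 + norm (x - y)) * f x * g y)"
    and "integrable lborel (\<lambda>y. log_potential f y * g y)"
    and "(\<integral>(x, y). ln (1 + norm (x - y)) * f x * g y \<partial>(lborel \<Otimes>\<^sub>M lborel))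
          = (\<integral>y. log_potential f y * g y \<partial>lborel)"
proof -
  note [measurable] = f(2) g(1)
  define I where "I = (\<integral>x. log_weight x * f x \<partial>lborel)"
  have I: "0 \<le> I"
    unfolding I_def using f(1) order_trans[OF zero_le_one log_weight_ge_1]
    by (intro integral_nonneg_AE AE_I2 mult_nonneg_nonneg) auto
  have "(\<integral>\<^sup>+ z. ennreal (norm ((\<lambda>(x, y). ln (1 + norm (x - y)) * f x * g y) z)) \<partial>(lborel \<Otimes>\<^sub>M lborel))
      = (\<integral>\<^sup>+ y. ennreal (\<bar>g y\<bar> * log_potential f y) \<partial>lborel)"
    by (subst lborel_pair.nn_integral_snd[symmetric]) (auto simp: nn_integral_log_kernel[OF f] case_prod_beta')
  also have "\<dots> \<le> (\<integral>\<^sup>+ y. ennreal (I * \<bar>log_weight y * g y\<bar>) \<partial>lborel)"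
  proof (intro nn_integral_mono ennreal_leI)
    fix y
    have "\<bar>g y\<bar> * log_potential f y \<le> \<bar>g y\<bar> * (I * log_weight y)"
      using log_potential_bounds(2)[OF f] unfolding I_def by (intro mult_left_mono) auto
    then show "\<bar>g y\<bar> * log_potential f y \<le> I * \<bar>log_weight y * g y\<bar>"
      by (simp add: abs_mult mult_ac)
  qed
  also have "\<dots> < \<infinity>"
    using integrable_abs[OF g(2)] I by (subst nn_integral_eq_integral) auto
  finally show int: "integrable (lborel \<Otimes>\<^sub>M lborel) (\<lambda>(x, y). ln (1 + norm (x - y)) * f x * g y)"
    by (intro integrableI_bounded) auto
  show "(\<integral>(x, y). ln (1 + norm (x - y)) * f x * g y \<partial>(lborel \<Otimes>\<^sub>M lborel))
      = (\<integral>y. log_potential f y * g y \<partial>lborel)"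
    using lborel_pair.integral_snd[OF int] by (simp add: log_potential_def)
  show "integrable lborel (\<lambda>y. log_potential f y * g y)"
    using lborel_pair.integrable_snd[OF int] by (simp add: log_potential_def)
qed

lemma log_potential_Lp_log_weight:
  assumes p: "p > 0" and V: "V \<in> Lp_space p log_weighted_lborel"
    and B: "Lp_norm p log_weighted_lborel V \<le> B"
  shows "\<bar>log_potential (\<lambda>x. \<bar>V x\<bar> powr p) y\<bar> \<le> B powr p * log_weight y"
    and "\<bar>log_potential (\<lambda>x. \<bar>V x\<bar> powr p) y - log_potential (\<lambda>x. \<bar>V x\<bar> powr p) y'\<bar> \<le> B powr p * dist y y'"
proof -
  have f: "\<And>x. 0 \<le> \<bar>V x\<bar> powr p" "(\<lambda>x. \<bar>V x\<bar> powr p) \<in> borel_measurable lborel"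
      "integrable lborel (\<lambda>x. log_weight x * \<bar>V x\<bar> powr p)"
    using Lp_space_log_weightD(1,2)[OF V] by auto
  have "(\<integral>x. log_weight x * \<bar>V x\<bar> powr p \<partial>lborel) = Lp_norm p log_weighted_lborel V powr p"
    using Lp_space_log_weightD(3)[OF V] by (simp add: Lp_norm_powr[OF p])
  also have "\<dots> \<le> B powr p"
    using B Lp_norm_nonneg p by (intro powr_mono2) auto
  finally have mass: "(\<integral>x. log_weight x * \<bar>V x\<bar> powr p \<partial>lborel) \<le> B powr p" .
  show "\<bar>log_potential (\<lambda>x. \<bar>V x\<bar> powr p) y\<bar> \<le> B powr p * log_weight y"
    using log_potential_bounds[OF f, of y]
      mult_right_mono[OF mass order_trans[OF zero_le_one log_weight_ge_1[of y]]]
    by simp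
  show "\<bar>log_potential (\<lambda>x. \<bar>V x\<bar> powr p) y - log_potential (\<lambda>x. \<bar>V x\<bar> powr p) y'\<bar> \<le> B powr p * dist y y'"
    by (rule order_trans[OF log_potential_lipschitz[OF f] mult_right_mono[OF mass zero_le_dist]])
qed

lemma log_weight_tail_uniformly_small:
  fixes V K :: "nat \<Rightarrow> 'a::euclidean_space \<Rightarrow> real"
  assumes pq: "p > 1" "q > 1" "1/p + 1/q = 1" and h: "h \<in> Lp_space q log_weighted_lborel"
    and V: "\<And>n. V n \<in> Lp_space p log_weighted_lborel" and v: "v \<in> Lp_space p log_weighted_lborel"
    and B: "\<And>n. Lp_norm p log_weighted_lborel (V n) \<le> B"
    and K_le: "\<And>n y. \<bar>K n y\<bar> \<le> A * log_weight y"
    and Kg: "\<And>n. integrable lborel (\<lambda>y. K n y * (h y * (V n y - v y)))"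
    and e: "e > 0"
  shows "\<exists>R. \<forall>n. (\<integral>y. \<bar>K n y * (h y * (V n y - v y))\<bar> * indicator (- cball 0 R) y \<partial>lborel) \<le> e"
proof -
  define T where "T m = Lp_norm q log_weighted_lborel (\<lambda>x. indicator (- cball 0 (real m)) x * h x)" for m
  have A: "0 \<le> A"
    using order_trans[OF abs_ge_zero K_le[of 0 0]] log_weight_ge_1[of "0::'a"]
    by (auto simp: zero_le_mult_iff)
  have "(\<lambda>m. T m * (A * (B + Lp_norm p log_weighted_lborel v))) \<longlonglongrightarrow> 0"
    unfolding T_def by (intro tendsto_mult_left_zero Lp_norm_tail_tendsto_zero) (use pq h in auto)
  from order_tendstoD(2)[OF this e]
  obtain m where m: "T m * (A * (B + Lp_norm p log_weighted_lborel v)) < e"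
    by (auto simp: eventually_sequentially)
  have "(\<integral>y. \<bar>K n y * (h y * (V n y - v y))\<bar> * indicator (- cball 0 (real m)) y \<partial>lborel) \<le> e" for n
  proof -
    define \<xi> where "\<xi> x = indicator (- cball 0 (real m)) x * h x" for x
    have "\<xi> \<in> Lp_space q log_weighted_lborel"
    proof (rule Lp_space_dominated(1)[OF h])
      show "\<xi> \<in> borel_measurable log_weighted_lborel"
        using Lp_space_log_weightD(1)[OF h] unfolding \<xi>_def measurable_density_eq1 by measurable
    qed (use pq in \<open>auto simp: \<xi>_def indicator_def\<close>)
    note H = log_weight_Holder_diff(1,2)[OF pq this V[of n] v]
    have "(\<integral>y. \<bar>K n y * (h y * (V n y - v y))\<bar> * indicator (- cball 0 (real m)) y \<partial>lborel)
        \<le> (\<integral>y. A * (log_weight y * \<bar>\<xi> y * (V n y - v y)\<bar>) \<partial>lborel)"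
    proof (rule integral_mono)
      show "integrable lborel (\<lambda>y. \<bar>K n y * (h y * (V n y - v y))\<bar> * indicator (- cball 0 (real m)) y)"
        using integrable_mult_indicator[of "- cball 0 (real m)" lborel "\<lambda>y. \<bar>K n y * (h y * (V n y - v y))\<bar>"]
          integrable_abs[OF Kg[of n]]
        by (simp add: mult.commute)
      show "integrable lborel (\<lambda>y. A * (log_weight y * \<bar>\<xi> y * (V n y - v y)\<bar>))"
        using integrable_abs[OF H(1)] by (simp add: abs_mult)
      show "\<bar>K n y * (h y * (V n y - v y))\<bar> * indicator (- cball 0 (real m)) y
          \<le> A * (log_weight y * \<bar>\<xi> y * (V n y - v y)\<bar>)" for y
        using mult_right_mono[OF K_le abs_ge_zero,
            of n y "h y * (V n y - v y) * indicator (- cball 0 (real m)) y"]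
        by (simp add: \<xi>_def abs_mult mult_ac)
    qed
    also have "\<dots> \<le> A * (T m * (Lp_norm p log_weighted_lborel (V n) + Lp_norm p log_weighted_lborel v))"
      using H(2) A unfolding T_def \<xi>_def by (simp add: mult_left_mono)
    also have "\<dots> \<le> A * (T m * (B + Lp_norm p log_weighted_lborel v))"
      unfolding T_def using A by (intro mult_left_mono add_right_mono B Lp_norm_nonneg) auto
    finally show ?thesis
      using m by (simp add: mult_ac)
  qed
  then show ?thesis
    by blast
qed

lemma log_kernel_double_integral_tendsto_zero:
  fixes V :: "nat \<Rightarrow> 'a::euclidean_space \<Rightarrow> real"
  assumes p: "p > 1"
    and V: "\<And>n. V n \<in> Lp_space p log_weighted_lborel" and v: "v \<in> Lp_space p log_weighted_lborel"
    and B: "\<And>n. Lp_norm p log_weighted_lborel (V n) \<le> B"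
    and weak: "\<And>f. Lp_bounded_linear p log_weighted_lborel f \<Longrightarrow> (\<lambda>n. f (V n)) \<longlonglongrightarrow> f v"
  shows "(\<forall>n. integrable (lborel \<Otimes>\<^sub>M lborel)
            (\<lambda>(x, y). ln (1 + norm (x - y)) * \<bar>V n x\<bar> powr p * \<bar>v y\<bar> powr (p - 2) * v y * (V n y - v y)))
    \<and> (\<lambda>n. \<integral>(x, y). ln (1 + norm (x - y)) * \<bar>V n x\<bar> powr p * \<bar>v y\<bar> powr (p - 2) * v y * (V n y - v y)
              \<partial>(lborel \<Otimes>\<^sub>M lborel)) \<longlonglongrightarrow> 0"
proof -
  define q where "q = p / (p - 1)"
  have pq: "p > 1" "q > 1" "1/p + 1/q = 1"
    using p by (auto simp: q_def field_simps)
  define h where "h y = \<bar>v y\<bar> powr (p - 2) * v y" for y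
  have h: "h \<in> Lp_space q log_weighted_lborel"
    unfolding h_def[abs_def] by (rule Lp_space_signed_power(2)[OF pq v])
  define g where "g n y = h y * (V n y - v y)" for n y
  define K where "K n = log_potential (\<lambda>x. \<bar>V n x\<bar> powr p)" for n
  note LpD = Lp_space_log_weightD[OF V] Lp_space_log_weightD(1)[OF v]
    Lp_space_log_weightD(1)[OF h]
  note [measurable] = LpD(1) LpD(4) LpD(5)
  have g_meas[measurable]: "g n \<in> borel_measurable lborel" for n
    unfolding g_def h_def by measurable
  have K_le: "\<bar>K n y\<bar> \<le> B powr p * log_weight y" for n y
    unfolding K_def using log_potential_Lp_log_weight(1)[OF _ V B] p by simp
  have K_lip: "\<bar>K n y - K n y'\<bar> \<le> B powr p * dist y y'" for n y y'
    unfolding K_def using log_potential_Lp_log_weight(2)[OF _ V B] p by simp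
  note H = log_weight_Holder_diff[OF pq h V v]
  define C where "C = Lp_norm q log_weighted_lborel h * (B + Lp_norm p log_weighted_lborel v)"
  have g_L1: "(\<integral>y. \<bar>g n y\<bar> \<partial>lborel) \<le> C" for n
  proof -
    have "(\<integral>y. \<bar>g n y\<bar> \<partial>lborel)
        \<le> Lp_norm q log_weighted_lborel h * (Lp_norm p log_weighted_lborel (V n) + Lp_norm p log_weighted_lborel v)"
      using H(4)[of n] by (simp add: g_def)
    also have "\<dots> \<le> C"
      unfolding C_def by (intro mult_left_mono add_right_mono B Lp_norm_nonneg)
    finally show ?thesis .
  qed
  have product: "integrable (lborel \<Otimes>\<^sub>M lborel) (\<lambda>(x, y). ln (1 + norm (x - y)) * \<bar>V n x\<bar> powr p * g n y)"
      "integrable lborel (\<lambda>y. K n y * g n y)"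
      "(\<integral>(x, y). ln (1 + norm (x - y)) * \<bar>V n x\<bar> powr p * g n y \<partial>(lborel \<Otimes>\<^sub>M lborel))
        = (\<integral>y. K n y * g n y \<partial>lborel)"
    for n
    using log_kernel_product[of "\<lambda>x. \<bar>V n x\<bar> powr p", OF _ _ LpD(2) g_meas] H(1)[of n]
    by (simp_all add: K_def g_def)
  have "(\<lambda>n. \<integral>y. K n y * g n y \<partial>lborel) \<longlonglongrightarrow> 0"
  proof (rule Lipschitz_kernel_integral_tendsto_zero[OF K_lip K_le _ product(2) g_L1])
    show "integrable lborel (g n)" for n
      using H(3)[of n] unfolding g_def[abs_def] by simp
    show "(\<lambda>n. \<integral>y. indicator Q y * g n y \<partial>lborel) \<longlonglongrightarrow> 0" if "Q \<in> sets lborel" for Q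
      unfolding g_def using log_weight_local_weak_limit[OF pq h V v weak that] .
    show "\<exists>R. \<forall>n. (\<integral>y. \<bar>K n y * g n y\<bar> * indicator (- cball 0 R) y \<partial>lborel) \<le> e" if "e > 0" for e
      unfolding g_def using log_weight_tail_uniformly_small[OF pq h V v B K_le product(2)[unfolded g_def] that]
      by simp
  qed
  with product(1,3) show ?thesis
    by (simp add: g_def h_def mult.assoc)
qed

theorem lemma8:
  fixes s p :: real and U :: "nat \<Rightarrow> 'a::euclidean_space \<Rightarrow> real" and u :: "'a \<Rightarrow> real"
  assumes "0 < s" "s < 1" "p > 2" "real DIM('a) = s * p"
    and "weak_convX s p U u"
  shows "(\<forall>n. integrable (lborel \<Otimes>\<^sub>M lborel)
            (\<lambda>(x, y). ln (1 + norm (x - y)) * \<bar>U n x\<bar> powr p * \<bar>u y\<bar> powr (p - 2) * u y * (U n y - u y)))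
    \<and> (\<lambda>n. \<integral>(x, y). ln (1 + norm (x - y)) * \<bar>U n x\<bar> powr p * \<bar>u y\<bar> powr (p - 2) * u y * (U n y - u y)
              \<partial>(lborel \<Otimes>\<^sub>M lborel)) \<longlonglongrightarrow> 0"
proof -
  have p: "p > 1" "p > 0"
    using \<open>p > 2\<close> by auto
  have X: "\<And>n. U n \<in> Xsp s p" "u \<in> Xsp s p"
    using \<open>weak_convX s p U u\<close> unfolding weak_convX_def by auto
  note Lp = Xsp_imp_Lp_log_weight(1)[OF p(2) X(1)] Xsp_imp_Lp_log_weight(1)[OF p(2) X(2)]
  note weak = weak_convX_imp_Lp_log_weight_tendsto[OF p(2) \<open>weak_convX s p U u\<close>]
  have "Bseq (\<lambda>n. Lp_norm p log_weighted_lborel (U n))"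
    by (rule Lp_uniform_boundedness[OF p(1) Lp(1)]) (rule convergent_imp_Bseq, rule convergentI, erule weak)
  then obtain B where "\<forall>n. norm (Lp_norm p log_weighted_lborel (U n)) \<le> B"
    by (rule BseqE)
  then have "\<And>n. Lp_norm p log_weighted_lborel (U n) \<le> B"
    by (metis abs_le_D1 real_norm_def)
  then show ?thesis
    by (rule log_kernel_double_integral_tendsto_zero[OF p(1) Lp(1) Lp(2) _ weak])
qed

end
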